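(* For each $k=1,\dots,n-3$ there exists a unique polynomial $\tilde F_k\in\mathbb C[x_0,\dots,x_n,y_1,\dots,y_m]$ such that (1) $\tilde F_k$ is quasi-homogeneous of multi-degree $(b_{0k},\dots,b_{mk})$, where $x_j$ has multi-degree $(w_j,a_{1j},\dots,a_{mj})$ and $y_i$ has multi-degree the $i$-th standard unit vector $(0,\dots,1,\dots,0)$ of $\mathbb Z^{m+1}$ (indices $0,\dots,m$); and (2) $\tilde F_k(x_0,\dots,x_n,1,\dots,1)=F_k(x_0,\dots,x_n)$.
   Context: Let $w_0,\dots,w_n$ be positive integers ($\gcd=1$), $X=V(F_1,\dots,F_{n-3})\subset\mathbb P(\vec w)=[(\mathbb C^{n+1}\setminus0)/\mathbb C^*]$ ($x_i$ of weight $w_i$) a smooth complete intersection, $F_j$ general quasi-homogeneous of degree $b_j$ with $\sum b_j=\sum w_i$, $X$ not in any linear subspace. For $\alpha\in\mathbb Q\cap[0,1)$, $C_\alpha=\{i:\alpha w_i\in\mathbb Z\}$, $\mathbb P_\alpha=\{x_i=0,i\notin C_\alpha\}$, $X_\alpha=X\cap\mathbb P_\alpha$, age $\iota_\alpha=\sum_j\lfloor\alpha b_j\rfloor-\sum_i\lfloor\alpha w_i\rfloor$; for $\dim X_\alpha=0$, $\Lambda\subset C_\alpha$: $U_\Lambda=\{x_k=0\ (k\in\Lambda),x_k\ne0\ (k\in C_\alpha\setminus\Lambda)\}\subset\mathbb P_\alpha$, $\overline{U_\Lambda}=\{x_k=0,k\in\Lambda\}$. Let $\phi_1,\dots,\phi_m$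 be (i) $\mathbf 1_{X_\alpha}$ for $\alpha\ne0$, $\dim X_\alpha=1$, $\iota_\alpha=1$; (ii) for $\alpha\ne0$, $\dim X_\alpha=0$, $\iota_\alpha=1$, the classes $\mathbf 1_{\overline{U_\Lambda}\cap X_\alpha}$ for $\Lambda$ with $U_\Lambda\cap X_\alpha\ne\emptyset$; $\alpha_i$ is the sector of $\phi_i$. If $\phi_i$ is of type (i): $a_{ij}=\lfloor\alpha_iw_j\rfloor$ ($0\le j\le n$), $b_{ik}=\lfloor\alpha_ib_k\rfloor$ ($1\le k\le n-3$). If $\phi_i=\mathbf 1_{\overline{U_\Lambda}\cap X_{\alpha_i}}$ is of type (ii): $a_{ij}=\lfloor\alpha_iw_j\rfloor-\delta_\Lambda(j)$, $b_{ik}=\lfloor\alpha_ib_k\rfloor-\delta_\Gamma(k)$, with $\Gamma=\{k:\alpha_ib_k\in\mathbb Z,F_k\text{ identically zero on }U_\Lambda\}$ and $\delta$ indicator functions. Also $b_{0k}=b_k$. *)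

theory Defs
  imports Complex_Main "HOL-Library.Poly_Mapping"
begin

type_synonym 'v cpoly = "('v \<Rightarrow>\<^sub>0 nat) \<Rightarrow>\<^sub>0 complex"

definition pvars :: "'v cpoly \<Rightarrow> 'v set" where
  "pvars p = {v. \<exists>e\<in>Poly_Mapping.keys p. v \<in> Poly_Mapping.keys e}"

definition peval :: "'v cpoly \<Rightarrow> ('v \<Rightarrow> complex) \<Rightarrow> complex" where
  "peval p x = (\<Sum>e\<in>Poly_Mapping.keys p. poly_mapping.lookup p e * (\<Prod>j\<in>Poly_Mapping.keys e. x j ^ poly_mapping.lookup e j))"

definition pderiv_eval :: "'v cpoly \<Rightarrow> 'v \<Rightarrow> ('v \<Rightarrow> complex) \<Rightarrow> complex" where
  "pderiv_eval p i x = (\<Sum>e\<in>Poly_Mapping.keys p. poly_mapping.lookup p e * of_nat (poly_mapping.lookup e i) *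
       (\<Prod>j\<in>Poly_Mapping.keys e. x j ^ (if j = i then poly_mapping.lookup e j - 1 else poly_mapping.lookup e j)))"

definition wdeg :: "(nat \<Rightarrow> nat) \<Rightarrow> (nat \<Rightarrow>\<^sub>0 nat) \<Rightarrow> nat" where
  "wdeg w e = (\<Sum>j\<in>Poly_Mapping.keys e. w j * poly_mapping.lookup e j)"

definition quasi_hom :: "nat \<Rightarrow> (nat \<Rightarrow> nat) \<Rightarrow> nat \<Rightarrow> nat cpoly \<Rightarrow> bool" where
  "quasi_hom n w d p \<longleftrightarrow> pvars p \<subseteq> {0..n} \<and> (\<forall>e\<in>Poly_Mapping.keys p. wdeg w e = d)"

text \<open>Points of C^(n+1), represented as maps nat \<Rightarrow> complex vanishing beyond n.\<close>
definition cspace :: "nat \<Rightarrow> (nat \<Rightarrow> complex) set" where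
  "cspace n = {x. \<forall>j>n. x j = 0}"

text \<open>Affine cone over X = V(F_1,..,F_{n-3}) with the origin removed.\<close>
definition Xcone :: "nat \<Rightarrow> (nat \<Rightarrow> nat cpoly) \<Rightarrow> (nat \<Rightarrow> complex) set" where
  "Xcone n F = {x \<in> cspace n. (\<exists>j. x j \<noteq> 0) \<and> (\<forall>k\<in>{1..n-3}. peval (F k) x = 0)}"

text \<open>Smoothness of the complete intersection stack X: at every point of the
  punctured affine cone the gradients of F_1..F_{n-3} are linearly independent.\<close>
definition quasi_smooth :: "nat \<Rightarrow> (nat \<Rightarrow> nat cpoly) \<Rightarrow> bool" where
  "quasi_smooth n F \<longleftrightarrow> (\<forall>x\<in>Xcone n F. \<forall>c::nat \<Rightarrow> complex.
      (\<forall>i\<le>n. (\<Sum>k\<in>{1..n-3}. c k * pderiv_eval (F k) i x) = 0) \<longrightarrow> (\<forall>k\<in>{1..n-3}. c k = 0))"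

definition zclosed :: "nat \<Rightarrow> (nat \<Rightarrow> complex) set \<Rightarrow> bool" where
  "zclosed n Z \<longleftrightarrow> (\<exists>P::nat cpoly set. (\<forall>p\<in>P. pvars p \<subseteq> {0..n}) \<and>
      Z = {x \<in> cspace n. \<forall>p\<in>P. peval p x = 0})"

definition zirred :: "nat \<Rightarrow> (nat \<Rightarrow> complex) set \<Rightarrow> bool" where
  "zirred n Z \<longleftrightarrow> zclosed n Z \<and> Z \<noteq> {} \<and>
     (\<forall>A B. zclosed n A \<and> zclosed n B \<and> Z = A \<union> B \<longrightarrow> Z = A \<or> Z = B)"

definition has_chain :: "nat \<Rightarrow> (nat \<Rightarrow> complex) set \<Rightarrow> nat \<Rightarrow> bool" where
  "has_chain n A d \<longleftrightarrow> (\<exists>Z::nat \<Rightarrow> (nat \<Rightarrow> complex) set.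
      (\<forall>i\<le>d. zirred n (Z i) \<and> Z i \<subseteq> A) \<and> (\<forall>i<d. Z i \<subset> Z (Suc i)))"

definition aff_dim_eq :: "nat \<Rightarrow> (nat \<Rightarrow> complex) set \<Rightarrow> nat \<Rightarrow> bool" where
  "aff_dim_eq n A d \<longleftrightarrow> has_chain n A d \<and> \<not> has_chain n A (Suc d)"

definition Csec :: "nat \<Rightarrow> (nat \<Rightarrow> nat) \<Rightarrow> rat \<Rightarrow> nat set" where
  "Csec n w \<alpha> = {i\<in>{0..n}. \<alpha> * of_nat (w i) \<in> \<int>}"

text \<open>Punctured affine cone over X_alpha = X \<inter> P_alpha.\<close>
definition Xsec :: "nat \<Rightarrow> (nat \<Rightarrow> nat) \<Rightarrow> (nat \<Rightarrow> nat cpoly) \<Rightarrow> rat \<Rightarrow> (nat \<Rightarrow> complex) set" where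
  "Xsec n w F \<alpha> = {x \<in> Xcone n F. \<forall>i\<in>{0..n} - Csec n w \<alpha>. x i = 0}"

text \<open>dim X_alpha = d (as a projective variety / stack): the affine cone
  X_alpha \<union> {0} has Krull dimension d+1.\<close>
definition dimX_eq :: "nat \<Rightarrow> (nat \<Rightarrow> nat) \<Rightarrow> (nat \<Rightarrow> nat cpoly) \<Rightarrow> rat \<Rightarrow> nat \<Rightarrow> bool" where
  "dimX_eq n w F \<alpha> d \<longleftrightarrow> aff_dim_eq n (insert (\<lambda>_. 0) (Xsec n w F \<alpha>)) (Suc d)"

definition age :: "nat \<Rightarrow> (nat \<Rightarrow> nat) \<Rightarrow> (nat \<Rightarrow> nat) \<Rightarrow> rat \<Rightarrow> int" where
  "age n w b \<alpha> = (\<Sum>j\<in>{1..n-3}. \<lfloor>\<alpha> * of_nat (b j)\<rfloor>) - (\<Sum>i\<in>{0..n}. \<lfloor>\<alpha> * of_nat (w i)\<rfloor>)"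

definition Uset :: "nat \<Rightarrow> (nat \<Rightarrow> nat) \<Rightarrow> rat \<Rightarrow> nat set \<Rightarrow> (nat \<Rightarrow> complex) set" where
  "Uset n w \<alpha> \<Lambda> = {x \<in> cspace n. (\<exists>j. x j \<noteq> 0) \<and> (\<forall>i\<in>{0..n} - Csec n w \<alpha>. x i = 0) \<and>
      (\<forall>k\<in>\<Lambda>. x k = 0) \<and> (\<forall>k\<in>Csec n w \<alpha> - \<Lambda>. x k \<noteq> 0)}"

text \<open>Labels of the classes phi_i: a pair (alpha, Lambda). Type (i) classes
  1_{X_alpha} are labelled (alpha, {}); type (ii) classes 1_{closure U_Lambda \<inter> X_alpha}
  are labelled (alpha, Lambda).\<close>
definition type1 :: "nat \<Rightarrow> (nat \<Rightarrow> nat) \<Rightarrow> (nat \<Rightarrow> nat) \<Rightarrow> (nat \<Rightarrow> nat cpoly) \<Rightarrow> rat \<Rightarrow> bool" where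
  "type1 n w b F \<alpha> \<longleftrightarrow> 0 < \<alpha> \<and> \<alpha> < 1 \<and> dimX_eq n w F \<alpha> 1 \<and> age n w b \<alpha> = 1"

definition type2 :: "nat \<Rightarrow> (nat \<Rightarrow> nat) \<Rightarrow> (nat \<Rightarrow> nat) \<Rightarrow> (nat \<Rightarrow> nat cpoly) \<Rightarrow> rat \<Rightarrow> bool" where
  "type2 n w b F \<alpha> \<longleftrightarrow> 0 < \<alpha> \<and> \<alpha> < 1 \<and> dimX_eq n w F \<alpha> 0 \<and> age n w b \<alpha> = 1"

definition Phi :: "nat \<Rightarrow> (nat \<Rightarrow> nat) \<Rightarrow> (nat \<Rightarrow> nat) \<Rightarrow> (nat \<Rightarrow> nat cpoly) \<Rightarrow> (rat \<times> nat set) set" where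
  "Phi n w b F = {(\<alpha>, \<Lambda>). (type1 n w b F \<alpha> \<and> \<Lambda> = {}) \<or>
      (type2 n w b F \<alpha> \<and> \<Lambda> \<subseteq> Csec n w \<alpha> \<and> Uset n w \<alpha> \<Lambda> \<inter> Xsec n w F \<alpha> \<noteq> {})}"

definition Gam :: "nat \<Rightarrow> (nat \<Rightarrow> nat) \<Rightarrow> (nat \<Rightarrow> nat) \<Rightarrow> (nat \<Rightarrow> nat cpoly) \<Rightarrow> rat \<Rightarrow> nat set \<Rightarrow> nat set" where
  "Gam n w b F \<alpha> \<Lambda> = {k\<in>{1..n-3}. \<alpha> * of_nat (b k) \<in> \<int> \<and> (\<forall>x\<in>Uset n w \<alpha> \<Lambda>. peval (F k) x = 0)}"

definition acoef :: "nat \<Rightarrow> (nat \<Rightarrow> nat) \<Rightarrow> (nat \<Rightarrow> nat) \<Rightarrow> (nat \<Rightarrow> nat cpoly) \<Rightarrow> rat \<times> nat set \<Rightarrow> nat \<Rightarrow> int" where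
  "acoef n w b F \<phi> j = (case \<phi> of (\<alpha>, \<Lambda>) \<Rightarrow>
     if type1 n w b F \<alpha> then \<lfloor>\<alpha> * of_nat (w j)\<rfloor>
     else \<lfloor>\<alpha> * of_nat (w j)\<rfloor> - (if j \<in> \<Lambda> then 1 else 0))"

definition bcoef :: "nat \<Rightarrow> (nat \<Rightarrow> nat) \<Rightarrow> (nat \<Rightarrow> nat) \<Rightarrow> (nat \<Rightarrow> nat cpoly) \<Rightarrow> rat \<times> nat set \<Rightarrow> nat \<Rightarrow> int" where
  "bcoef n w b F \<phi> k = (case \<phi> of (\<alpha>, \<Lambda>) \<Rightarrow>
     if type1 n w b F \<alpha> then \<lfloor>\<alpha> * of_nat (b k)\<rfloor>
     else \<lfloor>\<alpha> * of_nat (b k)\<rfloor> - (if k \<in> Gam n w b F \<alpha> \<Lambda> then 1 else 0))"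

text \<open>Variables: Inl j is x_j, Inr phi is y_phi.\<close>
type_synonym xyvar = "nat + (rat \<times> nat set)"

definition deg0 :: "(nat \<Rightarrow> nat) \<Rightarrow> (xyvar \<Rightarrow>\<^sub>0 nat) \<Rightarrow> int" where
  "deg0 w e = (\<Sum>v\<in>Poly_Mapping.keys e. (case v of Inl j \<Rightarrow> int (w j) | Inr _ \<Rightarrow> 0) * int (poly_mapping.lookup e v))"

definition degphi :: "(nat \<Rightarrow> int) \<Rightarrow> rat \<times> nat set \<Rightarrow> (xyvar \<Rightarrow>\<^sub>0 nat) \<Rightarrow> int" where
  "degphi a \<phi> e = (\<Sum>v\<in>Poly_Mapping.keys e. (case v of Inl j \<Rightarrow> a j | Inr \<psi> \<Rightarrow> (if \<psi> = \<phi> then 1 else 0)) * int (poly_mapping.lookup e v))"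

definition xpart :: "(xyvar \<Rightarrow>\<^sub>0 nat) \<Rightarrow> (nat \<Rightarrow>\<^sub>0 nat)" where
  "xpart e = Abs_poly_mapping (\<lambda>j. poly_mapping.lookup e (Inl j))"

definition subst_y1 :: "xyvar cpoly \<Rightarrow> nat cpoly" where
  "subst_y1 G = Abs_poly_mapping (\<lambda>f. \<Sum>e\<in>{e \<in> Poly_Mapping.keys G. xpart e = f}. poly_mapping.lookup G e)"

definition is_lift :: "nat \<Rightarrow> (nat \<Rightarrow> nat) \<Rightarrow> (nat \<Rightarrow> nat) \<Rightarrow> (nat \<Rightarrow> nat cpoly) \<Rightarrow> nat \<Rightarrow> xyvar cpoly \<Rightarrow> bool" where
  "is_lift n w b F k G \<longleftrightarrow>
     pvars G \<subseteq> Inl ` {0..n} \<union> Inr ` Phi n w b F \<and>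
     (\<forall>e\<in>Poly_Mapping.keys G. deg0 w e = int (b k) \<and>
        (\<forall>\<phi>\<in>Phi n w b F. degphi (acoef n w b F \<phi>) \<phi> e = bcoef n w b F \<phi> k)) \<and>
     subst_y1 G = F k"

end

theory Submission
  imports Defs "HOL-Computational_Algebra.Polynomial"
begin

(* Setting all y variables to 1 only forgets y-exponents, and the multi-degree conditions
   determine the exponent of y_phi in a lifted monomial from its x-part f: it has to be
   b_(phi,k) - sum_j a_(phi,j) f_j.  So the lift of F_k is unique, and it exists as soon as
   these exponents are nonnegative for all monomials f of F_k.  Since a_(phi,j) <= alpha w_j,
   quasi-homogeneity bounds sum_j a_(phi,j) f_j by alpha b_k, which settles every case except
   type (ii) with k in Gamma, where a strict inequality is needed.  There F_k vanishes on the
   torus U_Lambda, so no monomial of F_k is supported in C_alpha - Lambda, and any support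
   index j outside it has a_(phi,j) < alpha w_j.  Only the positivity of the weights (which
   makes the set of classes finite) and the quasi-homogeneity of the F_k are used. *)

definition iwdeg :: "(nat \<Rightarrow> int) \<Rightarrow> (nat \<Rightarrow>\<^sub>0 nat) \<Rightarrow> int" where
  "iwdeg a f = (\<Sum>j\<in>Poly_Mapping.keys f. a j * int (poly_mapping.lookup f j))"

lemma lookup_xpart [simp]: "poly_mapping.lookup (xpart e) j = poly_mapping.lookup e (Inl j)"
proof -
  have "{j. poly_mapping.lookup e (Inl j) \<noteq> 0} = Inl -` Poly_Mapping.keys e"
    by (auto simp: in_keys_iff)
  then show ?thesis
    unfolding xpart_def by (simp add: finite_vimageI)
qed

lemma keys_xpart: "Poly_Mapping.keys (xpart e) = Inl -` Poly_Mapping.keys e"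
  by (auto simp: in_keys_iff)

lemma sum_keys_xyvar:
  "(\<Sum>v\<in>Poly_Mapping.keys e. g v) =
     (\<Sum>j\<in>Poly_Mapping.keys (xpart e). g (Inl j)) + (\<Sum>v\<in>Poly_Mapping.keys e \<inter> range Inr. g v)"
proof -
  have split:
    "Poly_Mapping.keys e = Inl ` Poly_Mapping.keys (xpart e) \<union> (Poly_Mapping.keys e \<inter> range Inr)"
  proof -
    have "v \<in> range Inl \<or> v \<in> range Inr" for v :: xyvar
      by (cases v) auto
    then show ?thesis
      by (auto simp: keys_xpart)
  qed
  show ?thesis
    by (subst split, subst sum.union_disjoint) (auto simp: sum.reindex)
qed

lemma deg0_eq_wdeg_xpart: "deg0 w e = int (wdeg w (xpart e))"
  unfolding deg0_def wdeg_def by (subst sum_keys_xyvar) (auto intro: sum.neutral)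

lemma degphi_eq_iwdeg_xpart:
  "degphi a \<phi> e = iwdeg a (xpart e) + int (poly_mapping.lookup e (Inr \<phi>))"
proof -
  have "(\<Sum>v\<in>Poly_Mapping.keys e \<inter> range Inr.
          (case v of Inl j \<Rightarrow> a j | Inr \<psi> \<Rightarrow> if \<psi> = \<phi> then 1 else 0) * int (poly_mapping.lookup e v))
        = (\<Sum>v\<in>{Inr \<phi>}. int (poly_mapping.lookup e v))"
    by (rule sum.mono_neutral_cong) (auto simp: in_keys_iff split: if_splits)
  then show ?thesis
    unfolding degphi_def iwdeg_def by (subst sum_keys_xyvar) simp
qed

lemma lookup_subst_y1:
  "poly_mapping.lookup (subst_y1 G) f =
     (\<Sum>e\<in>{e \<in> Poly_Mapping.keys G. xpart e = f}. poly_mapping.lookup G e)"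
proof -
  have "{f. (\<Sum>e\<in>{e \<in> Poly_Mapping.keys G. xpart e = f}. poly_mapping.lookup G e) \<noteq> 0}
      \<subseteq> xpart ` Poly_Mapping.keys G"
  proof -
    have "(\<Sum>e\<in>{e \<in> Poly_Mapping.keys G. xpart e = f}. poly_mapping.lookup G e) = 0"
      if "f \<notin> xpart ` Poly_Mapping.keys G" for f
      using that by (intro sum.neutral) auto
    then show ?thesis
      by blast
  qed
  then show ?thesis
    unfolding subst_y1_def by (simp add: finite_subset)
qed

lemma lookup_subst_y1_xpart:
  assumes "Poly_Mapping.keys G \<subseteq> M" and "inj_on xpart M" and "e \<in> M"
  shows "poly_mapping.lookup (subst_y1 G) (xpart e) = poly_mapping.lookup G e"
proof -
  have "{e' \<in> Poly_Mapping.keys G. xpart e' = xpart e} =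
      (if e \<in> Poly_Mapping.keys G then {e} else {})"
    using assms by (auto dest: inj_onD)
  then show ?thesis
    by (simp add: lookup_subst_y1 in_keys_iff)
qed

lemma subst_y1_ex1:
  assumes inj: "inj_on xpart M" and P: "Poly_Mapping.keys P \<subseteq> xpart ` M"
  shows "\<exists>!G. Poly_Mapping.keys G \<subseteq> M \<and> subst_y1 G = P"
proof (rule ex_ex1I)
  define g where "g e = (if e \<in> M then poly_mapping.lookup P (xpart e) else 0)" for e
  have "{e. g e \<noteq> 0} \<subseteq> xpart -` Poly_Mapping.keys P \<inter> M"
    by (auto simp: g_def in_keys_iff split: if_splits)
  then have "finite {e. g e \<noteq> 0}"
    using finite_vimage_IntI[OF finite_keys inj] by (rule finite_subset)
  then have lookup_G: "poly_mapping.lookup (Abs_poly_mapping g) = g"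
    by simp
  have keys_G: "Poly_Mapping.keys (Abs_poly_mapping g) \<subseteq> M"
    by (auto simp: in_keys_iff lookup_G g_def split: if_splits)
  have "subst_y1 (Abs_poly_mapping g) = P"
  proof (rule poly_mapping_eqI)
    fix f
    show "poly_mapping.lookup (subst_y1 (Abs_poly_mapping g)) f = poly_mapping.lookup P f"
    proof (cases "f \<in> xpart ` M")
      case True
      then obtain e where "e \<in> M" "f = xpart e"
        by blast
      then show ?thesis
        using lookup_subst_y1_xpart[OF keys_G inj] by (simp add: lookup_G g_def)
    next
      case False
      then have "f \<notin> Poly_Mapping.keys P"
        and no_preimage: "{e \<in> Poly_Mapping.keys (Abs_poly_mapping g). xpart e = f} = {}"
        using P keys_G by blast+
      then show ?thesis
        by (simp only: lookup_subst_y1 no_preimage sum.empty) (simp add: in_keys_iff)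
    qed
  qed
  then show "\<exists>G. Poly_Mapping.keys G \<subseteq> M \<and> subst_y1 G = P"
    using keys_G by blast
next
  fix G G'
  assume G: "Poly_Mapping.keys G \<subseteq> M \<and> subst_y1 G = P"
    and G': "Poly_Mapping.keys G' \<subseteq> M \<and> subst_y1 G' = P"
  show "G = G'"
  proof (rule poly_mapping_eqI)
    fix e
    show "poly_mapping.lookup G e = poly_mapping.lookup G' e"
    proof (cases "e \<in> M")
      case True
      then show ?thesis
        using lookup_subst_y1_xpart[of G M e] lookup_subst_y1_xpart[of G' M e] G G' inj by simp
    next
      case False
      then have "e \<notin> Poly_Mapping.keys G" and "e \<notin> Poly_Mapping.keys G'"
        using G G' by blast+
      then show ?thesis
        by (simp add: in_keys_iff)
    qed
  qed
qed

definition lift_monomials ::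
    "nat \<Rightarrow> (nat \<Rightarrow> nat) \<Rightarrow> nat \<Rightarrow> (rat \<times> nat set) set \<Rightarrow> (rat \<times> nat set \<Rightarrow> nat \<Rightarrow> int) \<Rightarrow>
      (rat \<times> nat set \<Rightarrow> int) \<Rightarrow> (xyvar \<Rightarrow>\<^sub>0 nat) set" where
  "lift_monomials n w d \<Phi> a c = {e. Poly_Mapping.keys e \<subseteq> Inl ` {0..n} \<union> Inr ` \<Phi> \<and>
      deg0 w e = int d \<and> (\<forall>\<phi>\<in>\<Phi>. degphi (a \<phi>) \<phi> e = c \<phi>)}"

lemma is_lift_iff:
  "is_lift n w b F k G \<longleftrightarrow>
     Poly_Mapping.keys G \<subseteq>
       lift_monomials n w (b k) (Phi n w b F) (acoef n w b F) (\<lambda>\<phi>. bcoef n w b F \<phi> k) \<and>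
     subst_y1 G = F k"
  unfolding is_lift_def lift_monomials_def pvars_def by blast

lemma lookup_Inr_lift_monomial:
  assumes "e \<in> lift_monomials n w d \<Phi> a c"
  shows "poly_mapping.lookup e (Inr \<phi>) = (if \<phi> \<in> \<Phi> then nat (c \<phi> - iwdeg (a \<phi>) (xpart e)) else 0)"
proof (cases "\<phi> \<in> \<Phi>")
  case True
  then show ?thesis
    using assms degphi_eq_iwdeg_xpart[of "a \<phi>" \<phi> e] by (simp add: lift_monomials_def)
next
  case False
  then have "Inr \<phi> \<notin> Poly_Mapping.keys e"
    using assms by (auto simp: lift_monomials_def)
  then show ?thesis
    using False by (simp add: in_keys_iff)
qed

lemma inj_on_xpart_lift_monomials: "inj_on xpart (lift_monomials n w d \<Phi> a c)"
proof (rule inj_onI)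
  fix e e'
  assume e: "e \<in> lift_monomials n w d \<Phi> a c" and e': "e' \<in> lift_monomials n w d \<Phi> a c"
    and eq: "xpart e = xpart e'"
  show "e = e'"
  proof (rule poly_mapping_eqI)
    fix v
    show "poly_mapping.lookup e v = poly_mapping.lookup e' v"
    proof (cases v)
      case (Inl j)
      then show ?thesis
        using eq by (metis lookup_xpart)
    next
      case (Inr \<phi>)
      then show ?thesis
        using eq lookup_Inr_lift_monomial[OF e] lookup_Inr_lift_monomial[OF e'] by simp
    qed
  qed
qed

lemma xpart_lift_monomials:
  assumes "finite \<Phi>" and "Poly_Mapping.keys f \<subseteq> {0..n}" and "wdeg w f = d"
    and "\<forall>\<phi>\<in>\<Phi>. iwdeg (a \<phi>) f \<le> c \<phi>"
  shows "f \<in> xpart ` lift_monomials n w d \<Phi> a c"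
proof -
  define h where "h v = (case v of Inl j \<Rightarrow> poly_mapping.lookup f j
      | Inr \<phi> \<Rightarrow> if \<phi> \<in> \<Phi> then nat (c \<phi> - iwdeg (a \<phi>) f) else 0)" for v
  have support_h: "{v. h v \<noteq> 0} \<subseteq> Inl ` Poly_Mapping.keys f \<union> Inr ` \<Phi>"
  proof
    fix v
    assume "v \<in> {v. h v \<noteq> 0}"
    then show "v \<in> Inl ` Poly_Mapping.keys f \<union> Inr ` \<Phi>"
      by (cases v) (auto simp: h_def in_keys_iff split: if_splits)
  qed
  then have "finite {v. h v \<noteq> 0}"
    using assms(1) by (simp add: finite_subset)
  then have lookup_e: "poly_mapping.lookup (Abs_poly_mapping h) = h"
    by simp
  have xpart_e: "xpart (Abs_poly_mapping h) = f"
    by (rule poly_mapping_eqI) (simp add: lookup_e h_def)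
  have "Abs_poly_mapping h \<in> lift_monomials n w d \<Phi> a c"
    unfolding lift_monomials_def
  proof (intro CollectI conjI ballI)
    show "Poly_Mapping.keys (Abs_poly_mapping h) \<subseteq> Inl ` {0..n} \<union> Inr ` \<Phi>"
    proof
      fix v
      assume "v \<in> Poly_Mapping.keys (Abs_poly_mapping h)"
      then have "v \<in> Inl ` Poly_Mapping.keys f \<union> Inr ` \<Phi>"
        using support_h by (simp add: in_keys_iff lookup_e subset_iff)
      then show "v \<in> Inl ` {0..n} \<union> Inr ` \<Phi>"
        using assms(2) by blast
    qed
    show "deg0 w (Abs_poly_mapping h) = int d"
      using assms(3) by (simp add: deg0_eq_wdeg_xpart xpart_e)
    show "degphi (a \<phi>) \<phi> (Abs_poly_mapping h) = c \<phi>" if "\<phi> \<in> \<Phi>" for \<phi>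
      using that assms(4) by (simp add: degphi_eq_iwdeg_xpart xpart_e lookup_e h_def)
  qed
  then show ?thesis
    using xpart_e by (metis image_eqI)
qed

section \<open>Polynomials vanishing on a torus\<close>

lemma base_digits_unique:
  fixes d d' :: "nat \<Rightarrow> nat"
  assumes "\<forall>j<m. d j < N" and "\<forall>j<m. d' j < N"
    and "(\<Sum>j<m. d j * N ^ j) = (\<Sum>j<m. d' j * N ^ j)" and "j < m"
  shows "d j = d' j"
  using assms
proof (induction m arbitrary: d d' j)
  case 0
  then show ?case by simp
next
  case (Suc m)
  have shift: "(\<Sum>j<Suc m. d j * N ^ j) = d 0 + N * (\<Sum>j<m. d (Suc j) * N ^ j)" for d :: "nat \<Rightarrow> nat"
    unfolding sum.lessThan_Suc_shift by (simp add: sum_distrib_left algebra_simps)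
  have "d 0 < N" and "d' 0 < N"
    using Suc.prems by auto
  moreover note eq = Suc.prems(3)[unfolded shift]
  ultimately have low: "d 0 = d' 0"
    by (metis mod_mult_self2 mod_less)
  with eq \<open>d 0 < N\<close> have high: "(\<Sum>j<m. d (Suc j) * N ^ j) = (\<Sum>j<m. d' (Suc j) * N ^ j)"
    by simp
  show ?case
  proof (cases j)
    case 0
    then show ?thesis using low by simp
  next
    case (Suc i)
    then show ?thesis
      using Suc.IH[of "\<lambda>j. d (Suc j)" "\<lambda>j. d' (Suc j)" i] Suc.prems high by auto
  qed
qed

definition kronecker_exponent :: "nat \<Rightarrow> (nat \<Rightarrow>\<^sub>0 nat) \<Rightarrow> nat" where
  "kronecker_exponent N e = (\<Sum>j\<in>Poly_Mapping.keys e. poly_mapping.lookup e j * N ^ j)"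

lemma inj_on_kronecker_exponent:
  fixes E :: "(nat \<Rightarrow>\<^sub>0 nat) set"
  assumes "finite T" and "\<forall>e\<in>E. Poly_Mapping.keys e \<subseteq> T"
    and "\<forall>e\<in>E. \<forall>j. poly_mapping.lookup e j < N"
  shows "inj_on (kronecker_exponent N) E"
proof (rule inj_onI)
  obtain m where m: "T \<subseteq> {..<m}"
    using assms(1) finite_nat_bounded by blast
  have expand: "kronecker_exponent N e = (\<Sum>j<m. poly_mapping.lookup e j * N ^ j)" if "e \<in> E" for e
    unfolding kronecker_exponent_def using that assms(2) m
    by (intro sum.mono_neutral_left) (auto simp: in_keys_iff)
  fix e e'
  assume e: "e \<in> E" and e': "e' \<in> E"
    and eq: "kronecker_exponent N e = kronecker_exponent N e'"
  show "e = e'"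
  proof (rule poly_mapping_eqI)
    fix j
    show "poly_mapping.lookup e j = poly_mapping.lookup e' j"
    proof (cases "j < m")
      case True
      then show ?thesis
        using base_digits_unique[of m "poly_mapping.lookup e" N "poly_mapping.lookup e'"]
          eq expand[OF e] expand[OF e'] e e' assms(3) by auto
    next
      case False
      then have "j \<notin> Poly_Mapping.keys e" and "j \<notin> Poly_Mapping.keys e'"
        using e e' assms(2) m by auto
      then show ?thesis
        by (simp add: in_keys_iff)
    qed
  qed
qed

lemma peval_kronecker:
  fixes z :: complex
  assumes "z \<noteq> 0"
  shows "peval P (\<lambda>j. if j \<in> T then z ^ N ^ j else 0) =
    (\<Sum>e\<in>{e \<in> Poly_Mapping.keys P. Poly_Mapping.keys e \<subseteq> T}.
       poly_mapping.lookup P e * z ^ kronecker_exponent N e)"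
proof -
  have monomial: "(\<Prod>j\<in>Poly_Mapping.keys e. (if j \<in> T then z ^ N ^ j else 0) ^ poly_mapping.lookup e j)
      = (if Poly_Mapping.keys e \<subseteq> T then z ^ kronecker_exponent N e else 0)"
    for e :: "nat \<Rightarrow>\<^sub>0 nat"
  proof (cases "Poly_Mapping.keys e \<subseteq> T")
    case True
    then show ?thesis
      by (simp add: kronecker_exponent_def power_sum power_mult[symmetric] mult.commute subset_iff
          cong: prod.cong)
  next
    case False
    then obtain j where "j \<in> Poly_Mapping.keys e" and "j \<notin> T"
      by blast
    then show ?thesis
      using False by (auto simp: in_keys_iff intro!: prod_zero bexI[of _ j])
  qed
  show ?thesis
    unfolding peval_def monomial by (simp add: sum.inter_filter[symmetric] if_distrib cong: if_cong)
qed

definition torus :: "nat set \<Rightarrow> (nat \<Rightarrow> complex) set" where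
  "torus T = {x. \<forall>j. x j \<noteq> 0 \<longleftrightarrow> j \<in> T}"

(* The Kronecker substitution x_j = z^(N^j), with N exceeding every exponent of P, keeps the
   monomials supported in T apart and turns P into a univariate polynomial vanishing for z \<noteq> 0. *)
lemma keys_not_subset_if_vanishing_on_torus:
  assumes "finite T" and vanish: "\<forall>x\<in>torus T. peval P x = 0" and f: "f \<in> Poly_Mapping.keys P"
  shows "\<not> Poly_Mapping.keys f \<subseteq> T"
proof
  assume fT: "Poly_Mapping.keys f \<subseteq> T"
  define N where "N = Suc (\<Sum>e\<in>Poly_Mapping.keys P. \<Sum>j\<in>Poly_Mapping.keys e. poly_mapping.lookup e j)"
  have N: "poly_mapping.lookup e j < N" if "e \<in> Poly_Mapping.keys P" for e j
  proof (cases "j \<in> Poly_Mapping.keys e")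
    case True
    have "poly_mapping.lookup e j \<le> (\<Sum>j\<in>Poly_Mapping.keys e. poly_mapping.lookup e j)"
      using True by (intro member_le_sum) auto
    also have "\<dots> \<le> (\<Sum>e\<in>Poly_Mapping.keys P. \<Sum>j\<in>Poly_Mapping.keys e. poly_mapping.lookup e j)"
      using that by (intro member_le_sum) auto
    finally show ?thesis
      unfolding N_def by simp
  qed (simp add: N_def in_keys_iff)
  define S where "S = {e \<in> Poly_Mapping.keys P. Poly_Mapping.keys e \<subseteq> T}"
  have inj: "inj_on (kronecker_exponent N) S"
    using inj_on_kronecker_exponent[OF assms(1)] N by (simp add: S_def)
  define q where "q = (\<Sum>e\<in>S. monom (poly_mapping.lookup P e) (kronecker_exponent N e))"
  have "poly q z = 0" if "z \<noteq> 0" for z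
  proof -
    have "(\<lambda>j. if j \<in> T then z ^ N ^ j else 0) \<in> torus T"
      using that by (simp add: torus_def)
    then have "peval P (\<lambda>j. if j \<in> T then z ^ N ^ j else 0) = 0"
      using vanish by blast
    then show ?thesis
      unfolding peval_kronecker[OF that] by (simp add: q_def poly_sum poly_monom S_def)
  qed
  then have "poly (pCons 0 q) z = 0" for z
    by (cases "z = 0") simp_all
  then have "q = 0"
    using poly_all_0_iff_0 by (metis pCons_eq_0_iff)
  have "f \<in> S"
    using f fT by (simp add: S_def)
  moreover have "finite S"
    by (simp add: S_def)
  ultimately have "coeff q (kronecker_exponent N f) = poly_mapping.lookup P f"
    using inj by (simp add: q_def coeff_sum inj_on_eq_iff if_distrib cong: if_cong)
  then show False
    using \<open>q = 0\<close> f by (simp add: in_keys_iff)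
qed

section \<open>Nonnegativity of the y-exponents\<close>

lemma iwdeg_le_wdeg:
  fixes \<alpha> :: rat
  assumes "\<forall>j\<in>Poly_Mapping.keys f. of_int (a j) \<le> \<alpha> * of_nat (w j)"
  shows "of_int (iwdeg a f) \<le> \<alpha> * of_nat (wdeg w f)"
proof -
  have "of_int (iwdeg a f) = (\<Sum>j\<in>Poly_Mapping.keys f. of_int (a j) * of_nat (poly_mapping.lookup f j))"
    by (simp add: iwdeg_def)
  also have "\<dots> \<le> (\<Sum>j\<in>Poly_Mapping.keys f. \<alpha> * of_nat (w j) * of_nat (poly_mapping.lookup f j))"
    using assms by (intro sum_mono mult_right_mono) auto
  also have "\<dots> = \<alpha> * of_nat (wdeg w f)"
    by (simp add: wdeg_def sum_distrib_left mult.assoc)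
  finally show ?thesis .
qed

lemma iwdeg_less_wdeg:
  fixes \<alpha> :: rat
  assumes "\<forall>j\<in>Poly_Mapping.keys f. of_int (a j) \<le> \<alpha> * of_nat (w j)"
    and "i \<in> Poly_Mapping.keys f" and "of_int (a i) < \<alpha> * of_nat (w i)"
  shows "of_int (iwdeg a f) < \<alpha> * of_nat (wdeg w f)"
proof -
  have "of_int (iwdeg a f) = (\<Sum>j\<in>Poly_Mapping.keys f. of_int (a j) * of_nat (poly_mapping.lookup f j))"
    by (simp add: iwdeg_def)
  also have "\<dots> < (\<Sum>j\<in>Poly_Mapping.keys f. \<alpha> * of_nat (w j) * of_nat (poly_mapping.lookup f j))"
    using assms by (intro sum_strict_mono_ex1) (auto intro: mult_right_mono simp: in_keys_iff)
  also have "\<dots> = \<alpha> * of_nat (wdeg w f)"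
    by (simp add: wdeg_def sum_distrib_left mult.assoc)
  finally show ?thesis .
qed

lemma acoef_le: "of_int (acoef n w b F (\<alpha>, \<Lambda>) j) \<le> \<alpha> * of_nat (w j)"
  unfolding acoef_def using of_int_floor_le[of "\<alpha> * of_nat (w j)"]
  by (auto simp del: of_int_floor_le)

lemma acoef_less:
  assumes "\<not> type1 n w b F \<alpha>" and "j \<le> n" and "j \<notin> Csec n w \<alpha> - \<Lambda>"
  shows "of_int (acoef n w b F (\<alpha>, \<Lambda>) j) < \<alpha> * of_nat (w j)"
proof (cases "j \<in> \<Lambda>")
  case True
  then show ?thesis
    unfolding acoef_def using assms(1) of_int_floor_le[of "\<alpha> * of_nat (w j)"]
    by (auto simp del: of_int_floor_le)
next
  case False
  then have "\<alpha> * of_nat (w j) \<notin> \<int>"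
    using assms(2,3) by (simp add: Csec_def)
  then have "of_int \<lfloor>\<alpha> * of_nat (w j)\<rfloor> < \<alpha> * of_nat (w j)"
    using frac_gt_0_iff[of "\<alpha> * of_nat (w j)"] by (simp add: frac_def)
  then show ?thesis
    using assms(1) False by (simp add: acoef_def)
qed

lemma torus_subset_Uset:
  assumes "Uset n w \<alpha> \<Lambda> \<noteq> {}"
  shows "torus (Csec n w \<alpha> - \<Lambda>) \<subseteq> Uset n w \<alpha> \<Lambda>"
proof
  obtain y j where "y \<in> Uset n w \<alpha> \<Lambda>" and "y j \<noteq> 0"
    using assms by (auto simp: Uset_def)
  moreover from this have "j \<le> n"
    by (auto simp: Uset_def cspace_def not_less)
  ultimately have j: "j \<in> Csec n w \<alpha> - \<Lambda>"
    unfolding Uset_def by auto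
  fix x
  assume "x \<in> torus (Csec n w \<alpha> - \<Lambda>)"
  then have "x i \<noteq> 0 \<longleftrightarrow> i \<in> Csec n w \<alpha> - \<Lambda>" for i
    by (simp add: torus_def)
  then show "x \<in> Uset n w \<alpha> \<Lambda>"
    using j by (auto simp: Uset_def cspace_def Csec_def) (meson leD)
qed

lemma iwdeg_acoef_le_bcoef:
  assumes qh: "quasi_hom n w (b k) (F k)" and \<phi>: "\<phi> \<in> Phi n w b F"
    and f: "f \<in> Poly_Mapping.keys (F k)"
  shows "iwdeg (acoef n w b F \<phi>) f \<le> bcoef n w b F \<phi> k"
proof -
  obtain \<alpha> \<Lambda> where \<phi>_eq: "\<phi> = (\<alpha>, \<Lambda>)"
    by (cases \<phi>)
  have keys_f: "Poly_Mapping.keys f \<subseteq> {0..n}" and deg_f: "wdeg w f = b k"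
    using qh f unfolding quasi_hom_def pvars_def by blast+
  have acoef_le_f: "\<forall>j\<in>Poly_Mapping.keys f. of_int (acoef n w b F \<phi> j) \<le> \<alpha> * of_nat (w j)"
    using acoef_le \<phi>_eq by blast
  show ?thesis
  proof (cases "\<not> type1 n w b F \<alpha> \<and> k \<in> Gam n w b F \<alpha> \<Lambda>")
    case False
    then have "bcoef n w b F \<phi> k = \<lfloor>\<alpha> * of_nat (b k)\<rfloor>"
      by (auto simp: bcoef_def \<phi>_eq)
    then show ?thesis
      using iwdeg_le_wdeg[OF acoef_le_f] deg_f by (simp add: le_floor_iff)
  next
    case True
    then have "Uset n w \<alpha> \<Lambda> \<noteq> {}"
      using \<phi> by (auto simp: Phi_def \<phi>_eq)
    moreover have "\<alpha> * of_nat (b k) \<in> \<int>" and "\<forall>x\<in>Uset n w \<alpha> \<Lambda>. peval (F k) x = 0"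
      using True by (auto simp: Gam_def)
    ultimately have "\<forall>x\<in>torus (Csec n w \<alpha> - \<Lambda>). peval (F k) x = 0"
      using torus_subset_Uset by blast
    moreover have "finite (Csec n w \<alpha> - \<Lambda>)"
      by (simp add: Csec_def)
    ultimately obtain j where j: "j \<in> Poly_Mapping.keys f" and "j \<notin> Csec n w \<alpha> - \<Lambda>"
      using keys_not_subset_if_vanishing_on_torus f by blast
    moreover have "j \<le> n"
      using j keys_f by auto
    ultimately have "of_int (acoef n w b F \<phi> j) < \<alpha> * of_nat (w j)"
      using acoef_less True \<phi>_eq by blast
    then have "of_int (iwdeg (acoef n w b F \<phi>) f) < \<alpha> * of_nat (b k)"
      using iwdeg_less_wdeg[OF acoef_le_f j] deg_f by simp
    also have "\<alpha> * of_nat (b k) = of_int \<lfloor>\<alpha> * of_nat (b k)\<rfloor>"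
      using \<open>\<alpha> * of_nat (b k) \<in> \<int>\<close> by (simp add: frac_def[symmetric])
    finally show ?thesis
      using True by (simp add: bcoef_def \<phi>_eq)
  qed
qed

section \<open>Finiteness of the set of classes\<close>

lemma Xsec_nonempty_if_dimX_eq:
  assumes "dimX_eq n w F \<alpha> d"
  shows "Xsec n w F \<alpha> \<noteq> {}"
proof
  assume "Xsec n w F \<alpha> = {}"
  obtain Z where Z: "\<forall>i\<le>Suc d. zirred n (Z i) \<and> Z i \<subseteq> insert (\<lambda>_. 0) (Xsec n w F \<alpha>)"
    and chain: "\<forall>i<Suc d. Z i \<subset> Z (Suc i)"
    using assms unfolding dimX_eq_def aff_dim_eq_def has_chain_def by blast
  have "Z 0 \<noteq> {}" and "Z 0 \<subset> Z 1" and "Z 1 \<subseteq> {\<lambda>_. 0}"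
    using Z chain \<open>Xsec n w F \<alpha> = {}\<close> by (auto simp: zirred_def)
  then show False
    by (auto simp: subset_singleton_iff)
qed

lemma Csec_nonempty_if_Xsec_nonempty:
  assumes "Xsec n w F \<alpha> \<noteq> {}"
  shows "Csec n w \<alpha> \<noteq> {}"
proof -
  obtain x j where "x \<in> Xsec n w F \<alpha>" and "x j \<noteq> 0"
    using assms by (auto simp: Xsec_def Xcone_def)
  moreover from this have "j \<le> n"
    by (auto simp: Xsec_def Xcone_def cspace_def not_less)
  ultimately have "j \<in> Csec n w \<alpha>"
    unfolding Xsec_def by auto
  then show ?thesis
    by blast
qed

lemma finite_rat_with_integral_multiple:
  assumes "0 < c"
  shows "finite {\<alpha> :: rat. 0 \<le> \<alpha> \<and> \<alpha> \<le> 1 \<and> \<alpha> * of_nat c \<in> \<int>}"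
proof -
  have "{\<alpha> :: rat. 0 \<le> \<alpha> \<and> \<alpha> \<le> 1 \<and> \<alpha> * of_nat c \<in> \<int>} \<subseteq> (\<lambda>m. of_int m / of_nat c) ` {0..int c}"
  proof
    fix \<alpha> :: rat
    assume \<alpha>: "\<alpha> \<in> {\<alpha>. 0 \<le> \<alpha> \<and> \<alpha> \<le> 1 \<and> \<alpha> * of_nat c \<in> \<int>}"
    then obtain m where m: "\<alpha> * of_nat c = of_int m"
      by (auto elim: Ints_cases)
    have "of_int m \<le> (of_nat c :: rat)" and "0 \<le> (of_int m :: rat)"
      using \<alpha> assms unfolding m[symmetric] by (auto intro: mult_left_le_one_le)
    then have "m \<in> {0..int c}"
      by simp
    moreover have "\<alpha> = of_int m / of_nat c"
      using m assms by (simp add: field_simps)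
    ultimately show "\<alpha> \<in> (\<lambda>m. of_int m / of_nat c) ` {0..int c}"
      by blast
  qed
  then show ?thesis
    by (rule finite_subset) simp
qed

lemma finite_Phi:
  assumes w_pos: "\<forall>i\<in>{0..n}. 0 < w i"
  shows "finite (Phi n w b F)"
proof -
  let ?A = "\<Union>i\<in>{0..n}. {\<alpha> :: rat. 0 \<le> \<alpha> \<and> \<alpha> \<le> 1 \<and> \<alpha> * of_nat (w i) \<in> \<int>}"
  have "(\<alpha>, \<Lambda>) \<in> ?A \<times> Pow {0..n}" if "(\<alpha>, \<Lambda>) \<in> Phi n w b F" for \<alpha> \<Lambda>
  proof -
    have "0 < \<alpha>" "\<alpha> < 1" "\<Lambda> \<subseteq> {0..n}" "\<exists>d. dimX_eq n w F \<alpha> d"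
      using that by (auto simp: Phi_def type1_def type2_def Csec_def)
    moreover from this obtain i where "i \<in> Csec n w \<alpha>"
      using Csec_nonempty_if_Xsec_nonempty Xsec_nonempty_if_dimX_eq by (meson ex_in_conv)
    ultimately show ?thesis
      by (auto simp: Csec_def)
  qed
  then have "Phi n w b F \<subseteq> ?A \<times> Pow {0..n}"
    by auto
  moreover have "finite ?A"
    using w_pos finite_rat_with_integral_multiple by blast
  ultimately show ?thesis
    by (simp add: finite_subset)
qed

theorem lemma3p8:
  fixes n :: nat and w b :: "nat \<Rightarrow> nat" and F :: "nat \<Rightarrow> nat cpoly"
  assumes w_pos: "\<forall>i\<in>{0..n}. 0 < w i"
    and w_gcd: "Gcd (w ` {0..n}) = 1"
    and F_qh: "\<forall>k\<in>{1..n-3}. quasi_hom n w (b k) (F k)"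
    and CY: "(\<Sum>k\<in>{1..n-3}. b k) = (\<Sum>i\<in>{0..n}. w i)"
    and smooth: "quasi_smooth n F"
    and nonlinear: "\<forall>k\<in>{1..n-3}. \<forall>i\<in>{0..n}. b k \<noteq> w i"
  shows "\<forall>k\<in>{1..n-3}. \<exists>!G. is_lift n w b F k G"
proof
  fix k
  assume "k \<in> {1..n-3}"
  then have qh: "quasi_hom n w (b k) (F k)"
    using F_qh by blast
  let ?M = "lift_monomials n w (b k) (Phi n w b F) (acoef n w b F) (\<lambda>\<phi>. bcoef n w b F \<phi> k)"
  have "Poly_Mapping.keys (F k) \<subseteq> xpart ` ?M"
  proof
    fix f
    assume f: "f \<in> Poly_Mapping.keys (F k)"
    then have "Poly_Mapping.keys f \<subseteq> {0..n}" and "wdeg w f = b k"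
      using qh unfolding quasi_hom_def pvars_def by blast+
    moreover have "\<forall>\<phi>\<in>Phi n w b F. iwdeg (acoef n w b F \<phi>) f \<le> bcoef n w b F \<phi> k"
      using iwdeg_acoef_le_bcoef qh f by blast
    ultimately show "f \<in> xpart ` ?M"
      by (rule xpart_lift_monomials[OF finite_Phi[OF w_pos]])
  qed
  then show "\<exists>!G. is_lift n w b F k G"
    unfolding is_lift_iff by (rule subst_y1_ex1[OF inj_on_xpart_lift_monomials])
qed

end
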